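(* Let $A$ be a real unital $^*$-algebra with underlying vector space $\mathbb{R}^n$ whose Hermitian elements are real, and let $N(s)=ss^*$ be its Algebraic Norm. Then, on a sufficiently small neighborhood of $\mathbf{1}$, $N(s)$ is the square of a special unital norm of $A$; that is, $\sqrt{N(s)}$ is a special unital norm.
   Context: $A$ is a real unital algebra (bilinear product, not necessarily associative) on $\mathbb{R}^n$ with the standard basis, equipped with an involutive antiautomorphism $s\mapsto s^*$ (linear, $(st)^*=t^*s^*$, $s^{**}=s$) such that every $s$ with $s^*=s$ is a real multiple of the identity $\mathbf{1}$; then $ss^*=s^*s$ is real, and for $ss^*\neq0$ the inverse is $s^{-1}=s^*/(ss^* )$. The Algebraic Norm is $N(s)=ss^*\in\mathbb{R}$. For these algebras one sets $\|\mathbf{1}\|^2=1$. With $s$ a column vector, $\mathbf{d}s$ the column of coordinate differentials and "$\cdot$" the Euclidean dot product: a normalized uncurling metric is a real symmetric $n\times n$ matrix $L$ with $d\big((s^{-1})^TL\,\mathbf{d}s\big)=0$ on an open ball centered at $\mathbf{1}$ consisting of units and with $s^TLs^{-1}=\|\mathbf{1}\|^2$ near $\mathbf{1}$; the associated special unital norm is $\ell_{\rm sp}(s)=\exp\!\big(\frac{1}{\|\mathbf{1}\|^2}\int_{\mathbf{1}}^s[Lt^{-1}]\cdot\mathbf{d}t\big)$ near $\mathbf{1}$. *)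

theory Defs
  imports "HOL-Analysis.Analysis"
begin

definition real_unital_star_alg ::
  "(real^'n \<Rightarrow> real^'n \<Rightarrow> real^'n) \<Rightarrow> real^'n \<Rightarrow> (real^'n \<Rightarrow> real^'n) \<Rightarrow> bool" where
  "real_unital_star_alg mul e star \<longleftrightarrow>
     bilinear mul \<and> (\<forall>x. mul e x = x \<and> mul x e = x) \<and>
     linear star \<and> (\<forall>s t. star (mul s t) = mul (star t) (star s)) \<and>
     (\<forall>s. star (star s) = s) \<and>
     (\<forall>s. star s = s \<longrightarrow> (\<exists>c::real. s = c *\<^sub>R e))"

definition alg_norm ::
  "(real^'n \<Rightarrow> real^'n \<Rightarrow> real^'n) \<Rightarrow> real^'n \<Rightarrow> (real^'n \<Rightarrow> real^'n) \<Rightarrow> real^'n \<Rightarrow> real" where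
  "alg_norm mul e star s = (THE c::real. mul s (star s) = c *\<^sub>R e)"

definition alg_inv ::
  "(real^'n \<Rightarrow> real^'n \<Rightarrow> real^'n) \<Rightarrow> real^'n \<Rightarrow> (real^'n \<Rightarrow> real^'n) \<Rightarrow> real^'n \<Rightarrow> real^'n" where
  "alg_inv mul e star s = (1 / alg_norm mul e star s) *\<^sub>R star s"

text \<open>Normalized uncurling metric: symmetric L; on an open ball around e consisting of
  units the 1-form (L s^{-1}) . ds is closed (Jacobian of s |-> L s^{-1} symmetric);
  and s^T L s^{-1} = ||1||^2 = 1 near e.\<close>
definition normalized_uncurling_metric ::
  "(real^'n \<Rightarrow> real^'n \<Rightarrow> real^'n) \<Rightarrow> real^'n \<Rightarrow> (real^'n \<Rightarrow> real^'n) \<Rightarrow> real^'n^'n \<Rightarrow> bool" where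
  "normalized_uncurling_metric mul e star L \<longleftrightarrow>
     transpose L = L \<and>
     (\<exists>r>0. (\<forall>s\<in>ball e r. alg_norm mul e star s \<noteq> 0) \<and>
            (\<forall>s\<in>ball e r. \<exists>F'. ((\<lambda>t. L *v alg_inv mul e star t) has_derivative F') (at s) \<and>
                 (\<forall>i j. F' (axis j 1) $ i = F' (axis i 1) $ j))) \<and>
     (\<forall>\<^sub>F s in nhds e. s \<bullet> (L *v alg_inv mul e star s) = 1)"

text \<open>Special unital norm exp(int_e^s (L t^{-1}) . dt), the line integral taken along the
  straight segment from e to s (path independent on the ball, the form being closed).\<close>
definition special_unital_norm ::
  "(real^'n \<Rightarrow> real^'n \<Rightarrow> real^'n) \<Rightarrow> real^'n \<Rightarrow> (real^'n \<Rightarrow> real^'n) \<Rightarrow> real^'n^'n \<Rightarrow> real^'n \<Rightarrow> real" where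
  "special_unital_norm mul e star L s =
     exp (integral {0..1} (\<lambda>\<tau>::real. (L *v alg_inv mul e star (e + \<tau> *\<^sub>R (s - e))) \<bullet> (s - e)))"

end

(*
  Polarizing the Algebraic Norm, x y* + y x* = 2 B(x,y) 1 for a symmetric bilinear form B
  with Gram matrix Q, so that N(s) = s . Q s is a quadratic form.  Moreover
  B(x*, y) = B(y*, x), so the matrix L with L x = Q x* is symmetric, and
  L s^-1 = Q s / N(s) is the gradient of (ln N)/2.  Near 1, where N > 0, the form
  (L s^-1) . ds is therefore exact, s . L s^-1 = 1, and its integral from 1 to s is
  ln sqrt N(s), because N(1) = 1.
*)
theory Submission
  imports Defs
begin

lemma inner_bilinear_matrix:
  fixes f :: "real^'n \<Rightarrow> real^'n \<Rightarrow> real"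
  assumes "bilinear f"
  shows "x \<bullet> ((\<chi> i j. f (axis i 1) (axis j 1)) *v y) = f x y"
proof -
  have "f x y = f (\<Sum>i\<in>UNIV. x $ i *\<^sub>R axis i 1) (\<Sum>j\<in>UNIV. y $ j *\<^sub>R axis j 1)"
    using basis_expansion[of x] basis_expansion[of y] by (simp add: scalar_mult_eq_scaleR)
  also have "\<dots> = (\<Sum>i\<in>UNIV. \<Sum>j\<in>UNIV. x $ i * y $ j * f (axis i 1) (axis j 1))"
    by (simp add: bilinear_sum[OF assms] sum.cartesian_product bilinear_lmul[OF assms]
        bilinear_rmul[OF assms] mult_ac)
  also have "\<dots> = x \<bullet> ((\<chi> i j. f (axis i 1) (axis j 1)) *v y)"
    by (simp add: inner_vec_def matrix_vector_mult_def sum_distrib_left mult_ac)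
  finally show ?thesis ..
qed

lemma inner_symmetric_matrix_commute:
  fixes Q :: "real^'n^'n"
  assumes "transpose Q = Q"
  shows "x \<bullet> (Q *v y) = y \<bullet> (Q *v x)"
  by (metis assms dot_lmul_matrix inner_commute vector_transpose_matrix)

lemma has_derivative_quadratic_form:
  fixes Q :: "real^'n^'n"
  assumes "transpose Q = Q"
  shows "((\<lambda>t. t \<bullet> (Q *v t)) has_derivative (\<lambda>h. 2 * (h \<bullet> (Q *v x)))) (at x within S)"
  by (auto intro!: derivative_eq_intros bounded_linear.has_derivative[OF matrix_vector_mul_bounded_linear]
      simp: inner_symmetric_matrix_commute[OF assms, of x])

lemma normalized_gradient_symmetric_jacobian:
  fixes Q :: "real^'n^'n"
  assumes "transpose Q = Q" and "s \<bullet> (Q *v s) \<noteq> 0"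
  shows "\<exists>F'. ((\<lambda>t. (1 / (t \<bullet> (Q *v t))) *\<^sub>R (Q *v t)) has_derivative F') (at s) \<and>
              (\<forall>i j. F' (axis j 1) $ i = F' (axis i 1) $ j)"
proof (intro exI conjI allI)
  define q where "q = s \<bullet> (Q *v s)"
  let ?F' = "\<lambda>h. (1 / q) *\<^sub>R (Q *v h) + ((- (h \<bullet> (Q *v s)) - s \<bullet> (Q *v h)) / (q * q)) *\<^sub>R (Q *v s)"
  show "((\<lambda>t. (1 / (t \<bullet> (Q *v t))) *\<^sub>R (Q *v t)) has_derivative ?F') (at s)"
    using assms(2)
    by (auto intro!: derivative_eq_intros
        bounded_linear.has_derivative[OF matrix_vector_mul_bounded_linear]
        simp: q_def field_simps)
  have entry: "(Q *v v) $ k = v \<bullet> (Q *v axis k 1)" for v k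
    by (metis inner_axis' inner_real_def inner_symmetric_matrix_commute[OF assms(1)] mult_1)
  show "?F' (axis j 1) $ i = ?F' (axis i 1) $ j" for i j
    using inner_symmetric_matrix_commute[OF assms(1)]
    by (simp only: vector_add_component vector_scaleR_component entry) (simp add: field_simps)
qed

lemma integral_normalized_gradient_segment:
  fixes Q :: "real^'n^'n"
  assumes "transpose Q = Q" and pos: "\<forall>t\<in>closed_segment a b. 0 < t \<bullet> (Q *v t)"
  shows "integral {0..1} (\<lambda>\<tau>. ((1 / ((a + \<tau> *\<^sub>R (b - a)) \<bullet> (Q *v (a + \<tau> *\<^sub>R (b - a))))) *\<^sub>R
             (Q *v (a + \<tau> *\<^sub>R (b - a)))) \<bullet> (b - a))
         = (ln (b \<bullet> (Q *v b)) - ln (a \<bullet> (Q *v a))) / 2"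
proof -
  define p where "p \<tau> = a + \<tau> *\<^sub>R (b - a)" for \<tau> :: real
  define g where "g \<tau> = ln (p \<tau> \<bullet> (Q *v p \<tau>)) / 2" for \<tau>
  have "(g has_vector_derivative ((1 / (p \<tau> \<bullet> (Q *v p \<tau>))) *\<^sub>R (Q *v p \<tau>)) \<bullet> (b - a))
          (at \<tau> within {0..1})" if "\<tau> \<in> {0..1}" for \<tau>
  proof -
    have "p \<tau> \<in> closed_segment a b"
      using that by (auto simp: p_def closed_segment_def algebra_simps intro!: exI[of _ \<tau>])
    then have pos_p: "0 < p \<tau> \<bullet> (Q *v p \<tau>)" using pos by blast
    have "(p has_derivative (\<lambda>h. h *\<^sub>R (b - a))) (at \<tau> within {0..1})"
      unfolding p_def by (auto intro!: derivative_eq_intros)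
    then have "((\<lambda>\<tau>. p \<tau> \<bullet> (Q *v p \<tau>)) has_real_derivative 2 * ((b - a) \<bullet> (Q *v p \<tau>)))
            (at \<tau> within {0..1})"
      unfolding has_field_derivative_def
      by (rule has_derivative_eq_rhs[OF has_derivative_compose[OF _ has_derivative_quadratic_form[OF assms(1)]]])
        (simp add: fun_eq_iff)
    then have "(g has_real_derivative ((1 / (p \<tau> \<bullet> (Q *v p \<tau>))) *\<^sub>R (Q *v p \<tau>)) \<bullet> (b - a))
          (at \<tau> within {0..1})"
      unfolding g_def using pos_p
      by (auto intro!: derivative_eq_intros simp: inner_commute)
    then show ?thesis
      by (simp add: has_real_derivative_iff_has_vector_derivative)
  qed
  then have "((\<lambda>\<tau>. ((1 / (p \<tau> \<bullet> (Q *v p \<tau>))) *\<^sub>R (Q *v p \<tau>)) \<bullet> (b - a)) has_integral g 1 - g 0) {0..1}"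
    by (intro fundamental_theorem_of_calculus) auto
  then show ?thesis
    by (simp add: integral_unique g_def p_def diff_divide_distrib)
qed

locale real_unital_star_algebra =
  fixes mul :: "real^'n \<Rightarrow> real^'n \<Rightarrow> real^'n" and e :: "real^'n"
    and star :: "real^'n \<Rightarrow> real^'n"
  assumes real_unital_star_alg: "real_unital_star_alg mul e star"
begin

lemma
  shows bilinear_mul: "bilinear mul"
    and mul_unit_left [simp]: "mul e x = x"
    and mul_unit_right [simp]: "mul x e = x"
    and linear_star: "linear star"
    and star_mul: "star (mul s t) = mul (star t) (star s)"
    and star_star [simp]: "star (star s) = s"
    and hermitian_real: "star s = s \<Longrightarrow> \<exists>c. s = c *\<^sub>R e"
  using real_unital_star_alg unfolding real_unital_star_alg_def by auto

sublocale mul: bounded_bilinear mul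
  using bilinear_mul bilinear_conv_bounded_bilinear by blast

sublocale star: linear star
  by (rule linear_star)

lemma unit_nonzero: "e \<noteq> 0"
proof
  assume "e = 0"
  then have "axis undefined 1 = (0::real^'n)"
    using mul_unit_left[of "axis undefined 1"] by (simp add: mul.zero_left)
  then show False by simp
qed

lemma star_unit [simp]: "star e = e"
  using star_mul[of e "star e"] by simp

text \<open>x y* + y x* is Hermitian, hence a real multiple of e; polar x y is half that
  multiple, read off through the inner product with e.\<close>
definition polar :: "real^'n \<Rightarrow> real^'n \<Rightarrow> real" where
  "polar x y = ((mul x (star y) + mul y (star x)) \<bullet> e) / (2 * (e \<bullet> e))"

lemma mul_star_add_mul_star: "mul x (star y) + mul y (star x) = (2 * polar x y) *\<^sub>R e"
proof -
  have "star (mul x (star y) + mul y (star x)) = mul x (star y) + mul y (star x)"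
    by (simp add: star.add star_mul add.commute)
  then obtain c where c: "mul x (star y) + mul y (star x) = c *\<^sub>R e"
    using hermitian_real by blast
  then have "polar x y = c / 2"
    using unit_nonzero by (simp add: polar_def)
  with c show ?thesis by simp
qed

lemma polar_commute: "polar x y = polar y x"
  by (simp add: polar_def add.commute)

lemma bilinear_polar: "bilinear polar"
  unfolding bilinear_def
  by (auto intro!: linearI simp: polar_def star.add star.scale mul.add_left mul.add_right
      mul.scaleR_left mul.scaleR_right add_divide_distrib algebra_simps)

lemma mul_star_self: "mul s (star s) = polar s s *\<^sub>R e"
  using mul_star_add_mul_star[of s s]
  by (simp add: scaleR_2[symmetric] scaleR_scaleR[symmetric] del: scaleR_scaleR)

lemma alg_norm_eq_polar: "alg_norm mul e star s = polar s s"
  by (simp add: alg_norm_def mul_star_self unit_nonzero)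

lemma polar_unit: "polar e e = 1"
  using mul_star_self[of e] unit_nonzero by (metis mul_unit_left scaleR_cancel_right scaleR_one star_unit)

lemma polar_star_commute: "polar (star x) y = polar (star y) x"
proof -
  have "\<exists>c. star x = c *\<^sub>R e - x" for x
    using hermitian_real[of "x + star x"] by (simp add: star.add add.commute) (metis add_diff_cancel_left')
  then obtain cx cy where cx: "star x = cx *\<^sub>R e - x" and cy: "star y = cy *\<^sub>R e - y"
    by metis
  have "mul (star x) (star y) + mul y x = mul (star y) (star x) + mul x y"
    unfolding cx cy
    by (simp add: mul.diff_left mul.diff_right mul.scaleR_left mul.scaleR_right algebra_simps)
  then show ?thesis by (simp add: polar_def)
qed

definition polar_matrix :: "real^'n^'n" where
  "polar_matrix = (\<chi> i j. polar (axis i 1) (axis j 1))"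

definition uncurling_matrix :: "real^'n^'n" where
  "uncurling_matrix = (\<chi> i j. polar (axis i 1) (star (axis j 1)))"

lemma inner_polar_matrix: "x \<bullet> (polar_matrix *v y) = polar x y"
  unfolding polar_matrix_def using bilinear_polar by (rule inner_bilinear_matrix)

lemma inner_uncurling_matrix: "x \<bullet> (uncurling_matrix *v y) = polar x (star y)"
proof -
  have "bilinear (\<lambda>x y. polar x (star y))"
    using bilinear_polar linear_star unfolding bilinear_def by (auto intro: linear_compose[unfolded o_def])
  then show ?thesis
    unfolding uncurling_matrix_def by (rule inner_bilinear_matrix)
qed

lemma transpose_polar_matrix: "transpose polar_matrix = polar_matrix"
  by (simp add: polar_matrix_def transpose_def vec_eq_iff polar_commute)

lemma transpose_uncurling_matrix: "transpose uncurling_matrix = uncurling_matrix"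
proof -
  have "polar x (star y) = polar y (star x)" for x y
    by (metis polar_commute polar_star_commute)
  then show ?thesis
    by (simp add: uncurling_matrix_def transpose_def vec_eq_iff)
qed

lemma quadratic_form_polar_matrix: "s \<bullet> (polar_matrix *v s) = alg_norm mul e star s"
  by (simp add: inner_polar_matrix alg_norm_eq_polar)

lemma uncurling_matrix_alg_inv:
  "uncurling_matrix *v alg_inv mul e star t = (1 / alg_norm mul e star t) *\<^sub>R (polar_matrix *v t)"
  by (rule vector_eq_ldot[THEN iffD1], rule allI)
    (simp add: alg_inv_def inner_uncurling_matrix inner_polar_matrix star.scale
      bilinear_rmul[OF bilinear_polar])

lemma alg_norm_pos_near_unit: "\<exists>r>0. \<forall>s\<in>ball e r. 0 < alg_norm mul e star s"
proof -
  have "continuous_on UNIV (\<lambda>s. s \<bullet> (polar_matrix *v s))"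
    by (intro continuous_intros linear_continuous_on) simp
  then have "open {s. 0 < alg_norm mul e star s}"
    unfolding quadratic_form_polar_matrix by (rule open_Collect_less[OF continuous_on_const])
  moreover have "e \<in> {s. 0 < alg_norm mul e star s}"
    by (simp add: alg_norm_eq_polar polar_unit)
  ultimately obtain r where "r > 0" and "ball e r \<subseteq> {s. 0 < alg_norm mul e star s}"
    by (rule openE)
  then show ?thesis
    by blast
qed

lemma normalized_uncurling_metric_uncurling_matrix:
  "normalized_uncurling_metric mul e star uncurling_matrix"
proof -
  obtain r where "r > 0" and pos: "\<forall>s\<in>ball e r. 0 < alg_norm mul e star s"
    using alg_norm_pos_near_unit by blast
  have "\<exists>F'. ((\<lambda>t. uncurling_matrix *v alg_inv mul e star t) has_derivative F') (at s) \<and>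
          (\<forall>i j. F' (axis j 1) $ i = F' (axis i 1) $ j)" if "s \<in> ball e r" for s
    using normalized_gradient_symmetric_jacobian[OF transpose_polar_matrix, of s] pos[rule_format, OF that]
    by (simp add: uncurling_matrix_alg_inv quadratic_form_polar_matrix)
  moreover have "\<forall>\<^sub>F s in nhds e. s \<bullet> (uncurling_matrix *v alg_inv mul e star s) = 1"
    using eventually_nhds_ball[OF \<open>r > 0\<close>]
    by (rule eventually_mono) (use pos in \<open>force simp: uncurling_matrix_alg_inv quadratic_form_polar_matrix\<close>)
  ultimately show ?thesis
    unfolding normalized_uncurling_metric_def using transpose_uncurling_matrix \<open>r > 0\<close> pos
    by fastforce
qed

lemma special_unital_norm_uncurling_matrix:
  assumes "\<forall>t\<in>closed_segment e s. 0 < alg_norm mul e star t"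
  shows "special_unital_norm mul e star uncurling_matrix s = sqrt (alg_norm mul e star s)"
proof -
  have "0 < alg_norm mul e star s" using assms by simp
  have "integral {0..1} (\<lambda>\<tau>. (uncurling_matrix *v alg_inv mul e star (e + \<tau> *\<^sub>R (s - e))) \<bullet> (s - e))
      = (ln (alg_norm mul e star s) - ln (alg_norm mul e star e)) / 2"
    using integral_normalized_gradient_segment[OF transpose_polar_matrix, of e s] assms
    by (simp add: uncurling_matrix_alg_inv quadratic_form_polar_matrix)
  also have "\<dots> = ln (sqrt (alg_norm mul e star s))"
    using \<open>0 < alg_norm mul e star s\<close> by (simp add: alg_norm_eq_polar polar_unit ln_sqrt)
  finally show ?thesis
    using \<open>0 < alg_norm mul e star s\<close> by (simp add: special_unital_norm_def)
qed

end

theorem proposition10p8: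
  fixes mul :: "real^'n \<Rightarrow> real^'n \<Rightarrow> real^'n" and e :: "real^'n"
    and star :: "real^'n \<Rightarrow> real^'n"
  assumes "real_unital_star_alg mul e star"
  shows "\<exists>L. normalized_uncurling_metric mul e star L \<and>
           (\<forall>\<^sub>F s in nhds e. special_unital_norm mul e star L s = sqrt (alg_norm mul e star s))"
proof -
  interpret real_unital_star_algebra mul e star
    using assms by unfold_locales
  obtain r where "r > 0" and pos: "\<forall>s\<in>ball e r. 0 < alg_norm mul e star s"
    using alg_norm_pos_near_unit by blast
  have on_ball: "special_unital_norm mul e star uncurling_matrix s = sqrt (alg_norm mul e star s)"
    if "s \<in> ball e r" for s
    using closed_segment_subset[of e "ball e r" s] that \<open>r > 0\<close> pos
    by (intro special_unital_norm_uncurling_matrix) auto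
  have "\<forall>\<^sub>F s in nhds e.
      special_unital_norm mul e star uncurling_matrix s = sqrt (alg_norm mul e star s)"
    using eventually_nhds_ball[OF \<open>r > 0\<close>] by (rule eventually_mono) (rule on_ball)
  then show ?thesis
    using normalized_uncurling_metric_uncurling_matrix by blast
qed

end
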